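(* For every integer $n\ge1$ and every $u\in V$, $\Pr(E_{2u})<\dfrac{9}{2\ln(n+1)}$.
   Context: For an integer $n\ge1$, the $n$-octahedral graph $G'_n=(V,E')$ is the undirected graph with vertex set $V=\{u\in\mathbb{Z}^3:|u_1|+|u_2|+|u_3|=n\}$ and edge set $E'=\{\{v,w\}\subset V: v\neq w,\ |v_i-w_i|\le 1 \text{ for all } i=1,2,3\}$. For $u,v\in V$, $d_{uv}$ denotes the shortest-path distance in $G'_n$, and $Z_u=\left(\sum_{w\in V\setminus\{u\}} d_{uw}^{-2}\right)^{-1}$. The OSW random graph $G_n=(V,E)$ is the directed graph in which, for every $\{u,v\}\in E'$, both $(u,v),(v,u)\in E$, and in addition each vertex $u\in V$, independently of the others, chooses one vertex $v\in V\setminus\{u\}$ with probability $Z_u d_{uv}^{-2}$ and the long-range edge $(u,v)$ is added; $C_{uv}$ denotes the event that $u$ chooses $v$. For an ordered pair $(x,y)$ of distinct vertices, say $(x,y)$ is of type $s$ if $\{x,y\}\in E'$, and of type $w$ if $d_{xy}\ge2$ and $C_{xy}$ occurs. A C3 rooted at $u$ of type $(t_1,t_2,t_3)\in\{s,w\}^3$ is a triple $(u,a,b)$ of pairwise distinct vertices such that $(u,a)$ is of type $t_1$, $(a,b)$ is of type $t_2$ and $(b,u)$ is of type $t_3$. $E_{2u}$ is the event that there exists a C3 rooted at $u$ of type $(s,w,s)$. *)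

theory Defs
  imports "HOL-Probability.Probability"
begin

type_synonym vtx = "int \<times> int \<times> int"

definition octV :: "nat \<Rightarrow> vtx set" where
  "octV n = {(x, y, z). \<bar>x\<bar> + \<bar>y\<bar> + \<bar>z\<bar> = int n}"

definition octAdj :: "nat \<Rightarrow> vtx \<Rightarrow> vtx \<Rightarrow> bool" where
  "octAdj n v w \<longleftrightarrow> v \<in> octV n \<and> w \<in> octV n \<and> v \<noteq> w \<and>
     \<bar>fst v - fst w\<bar> \<le> 1 \<and> \<bar>fst (snd v) - fst (snd w)\<bar> \<le> 1 \<and>
     \<bar>snd (snd v) - snd (snd w)\<bar> \<le> 1"

definition octDist :: "nat \<Rightarrow> vtx \<Rightarrow> vtx \<Rightarrow> nat" where
  "octDist n u v = (LEAST k. (u, v) \<in> ({(a, b). octAdj n a b}) ^^ k)"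

definition octZ :: "nat \<Rightarrow> vtx \<Rightarrow> real" where
  "octZ n u = inverse (\<Sum>w \<in> octV n - {u}. 1 / (real (octDist n u w))^2)"

definition choice_pmf :: "nat \<Rightarrow> vtx \<Rightarrow> vtx pmf" where
  "choice_pmf n u = embed_pmf (\<lambda>v. if v \<in> octV n - {u}
       then octZ n u / (real (octDist n u v))^2 else 0)"

text \<open>Joint (independent) choices of all vertices: an outcome is the function
  mapping each vertex u to the vertex it chooses (C_uv iff f u = v).\<close>
definition osw_pmf :: "nat \<Rightarrow> (vtx \<Rightarrow> vtx) pmf" where
  "osw_pmf n = Pi_pmf (octV n) (0, 0, 0) (choice_pmf n)"

definition type_s :: "nat \<Rightarrow> vtx \<Rightarrow> vtx \<Rightarrow> bool" where
  "type_s n x y \<longleftrightarrow> octAdj n x y"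

definition type_w :: "nat \<Rightarrow> (vtx \<Rightarrow> vtx) \<Rightarrow> vtx \<Rightarrow> vtx \<Rightarrow> bool" where
  "type_w n f x y \<longleftrightarrow> x \<in> octV n \<and> y \<in> octV n \<and> x \<noteq> y \<and> octDist n x y \<ge> 2 \<and> f x = y"

definition E2 :: "nat \<Rightarrow> vtx \<Rightarrow> (vtx \<Rightarrow> vtx) set" where
  "E2 n u = {f. \<exists>a b. u \<noteq> a \<and> u \<noteq> b \<and> a \<noteq> b \<and>
      type_s n u a \<and> type_w n f a b \<and> type_s n b u}"

end

theory Submission
  imports Defs "HOL-Analysis.Harmonic_Numbers"
begin

text \<open>Every vertex sees a triangular patch of the octahedron surface containing \<open>k + 1\<close>
  vertices within distance \<open>k\<close> for all \<open>k \<le> n/3\<close>, so the inverse-square distance sum is at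
  least a harmonic sum and exceeds \<open>ln (n + 1)\<close>; hence every \<open>Z_a < 1 / ln (n + 1)\<close>.
  An \<open>(s, w, s)\<close>-triangle at \<open>u\<close> needs two neighbours \<open>a, b\<close> of \<open>u\<close> at distance at least 2
  with \<open>a\<close> choosing \<open>b\<close>, which has probability at most \<open>Z_a / 4\<close>. Only the sign pattern
  of \<open>u\<close> matters for which such pairs exist, and a finite check shows there are at most 18
  of them, so the union bound gives \<open>18 / (4 ln (n + 1))\<close>.\<close>

abbreviation octRel :: "nat \<Rightarrow> vtx rel" where
  "octRel n \<equiv> {(v, w). octAdj n v w}"

definition inv_sq_dist_sum :: "nat \<Rightarrow> vtx \<Rightarrow> real" where
  "inv_sq_dist_sum n a = (\<Sum>w\<in>octV n - {a}. 1 / (real (octDist n a w))^2)"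

lemma octZ_eq: "octZ n a = inverse (inv_sq_dist_sum n a)"
  by (simp add: octZ_def inv_sq_dist_sum_def)

lemma finite_octV: "finite (octV n)"
proof (rule finite_subset)
  show "octV n \<subseteq> {-int n..int n} \<times> {-int n..int n} \<times> {-int n..int n}"
    by (auto simp: octV_def)
qed auto

subsection \<open>Graph distance\<close>

lemma octDist_le: "(u, v) \<in> octRel n ^^ k \<Longrightarrow> octDist n u v \<le> k"
  unfolding octDist_def by (rule Least_le)

lemma octDist_ge_1:
  assumes "(u, v) \<in> octRel n ^^ k" "u \<noteq> v"
  shows "1 \<le> octDist n u v"
proof -
  have "(u, v) \<in> octRel n ^^ octDist n u v"
    unfolding octDist_def by (rule LeastI[of _ k]) (fact assms(1))
  with assms(2) show ?thesis by (cases "octDist n u v") auto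
qed

lemma octDist_self: "octDist n v v = 0"
  using octDist_le[where k = 0] by simp

lemma octDist_le_1_if_octAdj: "octAdj n v w \<Longrightarrow> octDist n v w \<le> 1"
  by (rule octDist_le) simp

lemma relpow_grid:
  assumes col: "\<And>j. j < M \<Longrightarrow> (c 0 j, c 0 (Suc j)) \<in> R"
    and row: "\<And>i j. i + j < M \<Longrightarrow> (c i j, c (Suc i) j) \<in> R"
    and "i + j \<le> M"
  shows "(c 0 0, c i j) \<in> R ^^ (i + j)"
  using \<open>i + j \<le> M\<close>
proof (induction i)
  case 0
  then show ?case
  proof (induction j)
    case (Suc j)
    then show ?case using col[of j] by (auto intro: relpow_Suc_I)
  qed simp
next
  case (Suc i)
  then show ?case using row[of i j] by (auto intro: relpow_Suc_I)
qed

text \<open>Cyclic permutation of the coordinates is a graph automorphism; it lets us assume that the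
  first coordinate of a vertex has the largest absolute value.\<close>

definition rot :: "vtx \<Rightarrow> vtx" where
  "rot = (\<lambda>(x, y, z). (y, z, x))"

lemma rot_rot_rot [simp]: "rot (rot (rot v)) = v"
  by (simp add: rot_def split: prod.split)

lemma rot_in_octV_iff [simp]: "rot v \<in> octV n \<longleftrightarrow> v \<in> octV n"
  by (auto simp: rot_def octV_def split: prod.split)

lemma octAdj_rot_iff [simp]: "octAdj n (rot v) (rot w) \<longleftrightarrow> octAdj n v w"
  by (auto simp: octAdj_def octV_def rot_def split: prod.splits)

lemma relpow_rot:
  assumes "(u, v) \<in> octRel n ^^ k"
  shows "(rot u, rot v) \<in> octRel n ^^ k"
proof -
  obtain f where "f 0 = u" "f k = v" "\<forall>i<k. octAdj n (f i) (f (Suc i))"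
    using assms unfolding relpow_fun_conv by auto
  then show ?thesis unfolding relpow_fun_conv by (auto intro!: exI[of _ "rot \<circ> f"])
qed

lemma octDist_rot [simp]: "octDist n (rot u) (rot v) = octDist n u v"
proof -
  have "(rot u, rot v) \<in> octRel n ^^ k \<longleftrightarrow> (u, v) \<in> octRel n ^^ k" for k
    using relpow_rot[where u = u and v = v and k = k]
      relpow_rot[where u = "rot u" and v = "rot v" and k = k]
      relpow_rot[where u = "rot (rot u)" and v = "rot (rot v)" and k = k] by auto
  then show ?thesis by (simp add: octDist_def)
qed

lemma inv_sq_dist_sum_rot: "inv_sq_dist_sum n (rot a) = inv_sq_dist_sum n a"
proof -
  have "bij_betw rot (octV n - {a}) (octV n - {rot a})"
  proof (rule bij_betw_byWitness[of _ "rot \<circ> rot"])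
    show "rot ` (octV n - {a}) \<subseteq> octV n - {rot a}"
      by (auto dest: arg_cong[where f = "rot \<circ> rot"])
  qed (auto dest: arg_cong[where f = rot])
  then show ?thesis
    unfolding inv_sq_dist_sum_def by (subst sum.reindex_bij_betw[symmetric]) auto
qed

subsection \<open>The inverse-square distance sum exceeds \<open>ln (n + 1)\<close>\<close>

lemma inv_sq_dist_sum_ge_triangle:
  fixes c :: "nat \<Rightarrow> nat \<Rightarrow> vtx"
  assumes mem: "\<And>i j. i + j \<le> M \<Longrightarrow> c i j \<in> octV n"
    and reach: "\<And>i j. i + j \<le> M \<Longrightarrow> (c 0 0, c i j) \<in> octRel n ^^ (i + j)"
    and inj: "\<And>i j i' j'. i + j \<le> M \<Longrightarrow> i' + j' \<le> M \<Longrightarrow> c i j = c i' j' \<Longrightarrow> i = i' \<and> j = j'"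
  shows "(\<Sum>k=1..M. (real k + 1) / (real k)^2) \<le> inv_sq_dist_sum n (c 0 0)"
proof -
  define T where "T = Sigma {1..M} (\<lambda>k. {0..k})"
  define g where "g = (\<lambda>(k, i). c i (k - i))"
  have inj_g: "inj_on g T"
  proof (rule inj_onI)
    fix p q assume "p \<in> T" "q \<in> T" "g p = g q"
    then obtain k i k' i' where "p = (k, i)" "q = (k', i')" "i \<le> k" "k \<le> M" "i' \<le> k'" "k' \<le> M"
      "c i (k - i) = c i' (k' - i')"
      unfolding T_def g_def by auto
    with inj[of i "k - i" i' "k' - i'"] show "p = q" by auto
  qed
  have g_mem: "g p \<in> octV n - {c 0 0}" and g_dist: "1 \<le> octDist n (c 0 0) (g p)"
    "octDist n (c 0 0) (g p) \<le> fst p" if "p \<in> T" for p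
  proof -
    obtain k i where p: "p = (k, i)" "i \<le> k" "k \<le> M" "1 \<le> k"
      using \<open>p \<in> T\<close> unfolding T_def by auto
    have path: "(c 0 0, g p) \<in> octRel n ^^ k"
      using reach[of i "k - i"] p unfolding g_def by auto
    have "g p \<noteq> c 0 0"
      using inj[of i "k - i" 0 0] p unfolding g_def by auto
    with path mem[of i "k - i"] p octDist_ge_1 octDist_le
    show "g p \<in> octV n - {c 0 0}" "1 \<le> octDist n (c 0 0) (g p)"
      "octDist n (c 0 0) (g p) \<le> fst p"
      unfolding g_def by auto
  qed
  have "(\<Sum>k=1..M. (real k + 1) / (real k)^2) = (\<Sum>k\<in>{1..M}. \<Sum>i\<in>{0..k}. 1 / (real k)^2)"
    by (simp add: divide_simps add.commute)
  also have "\<dots> = (\<Sum>p\<in>T. 1 / (real (fst p))^2)"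
    unfolding T_def by (subst sum.Sigma) (auto simp: case_prod_beta)
  also have "\<dots> \<le> (\<Sum>p\<in>T. 1 / (real (octDist n (c 0 0) (g p)))^2)"
  proof (rule sum_mono)
    fix p assume "p \<in> T"
    with g_dist[OF this] show "1 / (real (fst p))^2 \<le> 1 / (real (octDist n (c 0 0) (g p)))^2"
      by (intro divide_left_mono power_mono) auto
  qed
  also have "\<dots> = (\<Sum>w\<in>g ` T. 1 / (real (octDist n (c 0 0) w))^2)"
    by (simp add: sum.reindex[OF inj_g])
  also have "\<dots> \<le> inv_sq_dist_sum n (c 0 0)"
  proof -
    have "g ` T \<subseteq> octV n - {c 0 0}" by (rule image_subsetI) (rule g_mem)
    then show ?thesis unfolding inv_sq_dist_sum_def by (intro sum_mono2) (simp_all add: finite_octV)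
  qed
  finally show ?thesis .
qed

lemma abs_sub_sgn: "0 \<le> k \<Longrightarrow> k \<le> \<bar>x\<bar> \<Longrightarrow> \<bar>x - sgn x * k\<bar> = \<bar>x\<bar> - k" for x k :: int
  by (cases "x < 0"; cases "x = 0") (auto simp: sgn_if)

text \<open>The triangle spanned from \<open>(x, y, z)\<close> by moving \<open>x\<close> towards 0 while moving \<open>y\<close> or \<open>z\<close>
  away from 0.\<close>

lemma inv_sq_dist_sum_ge_max_coord:
  assumes a: "(x, y, z) \<in> octV n" and "\<bar>y\<bar> \<le> \<bar>x\<bar>" "\<bar>z\<bar> \<le> \<bar>x\<bar>"
  shows "(\<Sum>k=1..nat \<bar>x\<bar>. (real k + 1) / (real k)^2) \<le> inv_sq_dist_sum n (x, y, z)"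
proof -
  define M where "M = nat \<bar>x\<bar>"
  define sy :: int where "sy = (if y < 0 then -1 else 1)"
  define sz :: int where "sz = (if z < 0 then -1 else 1)"
  define c where "c = (\<lambda>i j :: nat. (x - sgn x * int (i + j), y + sy * int i, z + sz * int j))"
  have mem: "c i j \<in> octV n" if "i + j \<le> M" for i j
  proof -
    have "\<bar>x - sgn x * int (i + j)\<bar> = \<bar>x\<bar> - int (i + j)"
      using that by (intro abs_sub_sgn) (auto simp: M_def)
    moreover have "\<bar>y + sy * int i\<bar> = \<bar>y\<bar> + int i" "\<bar>z + sz * int j\<bar> = \<bar>z\<bar> + int j"
      by (auto simp: sy_def sz_def)
    ultimately show ?thesis using a by (simp add: c_def octV_def)
  qed
  have signs: "sy \<noteq> 0" "\<bar>sy\<bar> \<le> 1" "sz \<noteq> 0" "\<bar>sz\<bar> \<le> 1" "\<bar>sgn x\<bar> \<le> 1"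
    by (auto simp: sy_def sz_def abs_sgn_eq)
  have "(c 0 0, c i j) \<in> octRel n ^^ (i + j)" if "i + j \<le> M" for i j
  proof (rule relpow_grid[OF _ _ that])
    show "(c 0 j, c 0 (Suc j)) \<in> octRel n" if "j < M" for j
      using mem[of 0 j] mem[of 0 "Suc j"] that signs
      by (auto simp: octAdj_def c_def algebra_simps)
    show "(c i j, c (Suc i) j) \<in> octRel n" if "i + j < M" for i j
      using mem[of i j] mem[of "Suc i" j] that signs
      by (auto simp: octAdj_def c_def algebra_simps)
  qed
  moreover have "i = i' \<and> j = j'" if "c i j = c i' j'" for i j i' j'
    using that signs by (auto simp: c_def)
  ultimately have "(\<Sum>k=1..M. (real k + 1) / (real k)^2) \<le> inv_sq_dist_sum n (c 0 0)"
    using mem by (intro inv_sq_dist_sum_ge_triangle) auto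
  then show ?thesis by (simp add: M_def c_def)
qed

lemma ln_3_less: "ln (3::real) < 5/4"
proof -
  have "(3::real) < (1 + (5/4) / real (8::nat)) ^ 8" by (simp add: power_def)
  also have "\<dots> \<le> exp (5/4)" by (rule exp_ge_one_plus_x_over_n_power_n) auto
  finally show ?thesis by (metis exp_gt_zero ln_exp ln_less_cancel_iff zero_less_numeral)
qed

lemma ln_less_sum_harm_plus_inv_sq:
  assumes "1 \<le> M" "n \<le> 3 * M"
  shows "ln (real n + 1) < (\<Sum>k=1..M. (real k + 1) / (real k)^2)"
proof (cases "M = 1")
  case True
  have "ln (real n + 1) \<le> ln (2 * 2)" using assms True by simp
  also have "\<dots> = 2 * ln 2" by (simp only: ln_mult) simp
  also have "\<dots> < 2" using ln_2_less_1 by simp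
  finally show ?thesis using True by simp
next
  case False
  have split: "(\<Sum>k=1..M. (real k + 1) / (real k)^2) = harm M + (\<Sum>k=1..M. 1 / (real k)^2)"
    unfolding harm_def by (subst sum.distrib[symmetric])
      (auto intro!: sum.cong simp: field_simps power2_eq_square)
  have "(\<Sum>k\<in>{1, 2}. 1 / (real k)^2) \<le> (\<Sum>k=1..M. 1 / (real k)^2)"
    using assms False by (intro sum_mono2) auto
  then have inv_sq: "5/4 \<le> (\<Sum>k=1..M. 1 / (real k)^2)" by simp
  have "ln (real n + 1) \<le> ln (3 * (real M + 1))" using assms by simp
  also have "\<dots> = ln 3 + ln (real M + 1)" using ln_mult[of 3 "real M + 1"] by simp
  finally show ?thesis using split inv_sq ln_le_harm[of M] ln_3_less by linarith
qed

lemma ln_less_inv_sq_dist_sum: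
  assumes "a \<in> octV n" "1 \<le> n"
  shows "ln (real n + 1) < inv_sq_dist_sum n a"
proof -
  obtain x y z where b: "(x, y, z) \<in> octV n" "\<bar>y\<bar> \<le> \<bar>x\<bar>" "\<bar>z\<bar> \<le> \<bar>x\<bar>"
    and same: "inv_sq_dist_sum n (x, y, z) = inv_sq_dist_sum n a"
  proof -
    obtain p q r where a: "a = (p, q, r)" by (cases a)
    have rot1: "rot (r, p, q) = a" and rot2: "rot (rot (q, r, p)) = a"
      by (simp_all add: a rot_def)
    consider "\<bar>q\<bar> \<le> \<bar>p\<bar> \<and> \<bar>r\<bar> \<le> \<bar>p\<bar>" | "\<bar>r\<bar> \<le> \<bar>q\<bar> \<and> \<bar>p\<bar> \<le> \<bar>q\<bar>"
      | "\<bar>p\<bar> \<le> \<bar>r\<bar> \<and> \<bar>q\<bar> \<le> \<bar>r\<bar>" by linarith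
    then show ?thesis
    proof cases
      case 1
      then show ?thesis using that[of p q r] assms(1) by (simp add: a)
    next
      case 2
      show ?thesis
      proof (rule that[of q r p])
        show "(q, r, p) \<in> octV n" using assms(1) unfolding rot2[symmetric] by simp
        show "inv_sq_dist_sum n (q, r, p) = inv_sq_dist_sum n a"
          unfolding rot2[symmetric] by (simp add: inv_sq_dist_sum_rot)
      qed (use 2 in auto)
    next
      case 3
      show ?thesis
      proof (rule that[of r p q])
        show "(r, p, q) \<in> octV n" using assms(1) unfolding rot1[symmetric] by simp
        show "inv_sq_dist_sum n (r, p, q) = inv_sq_dist_sum n a"
          unfolding rot1[symmetric] by (simp add: inv_sq_dist_sum_rot)
      qed (use 3 in auto)
    qed
  qed
  have "1 \<le> nat \<bar>x\<bar>" "n \<le> 3 * nat \<bar>x\<bar>"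
    using b assms(2) by (auto simp: octV_def)
  then have "ln (real n + 1) < (\<Sum>k=1..nat \<bar>x\<bar>. (real k + 1) / (real k)^2)"
    by (rule ln_less_sum_harm_plus_inv_sq)
  also have "\<dots> \<le> inv_sq_dist_sum n a"
    using inv_sq_dist_sum_ge_max_coord[OF b] same by simp
  finally show ?thesis .
qed

lemma octZ_bounds:
  assumes "a \<in> octV n" "1 \<le> n"
  shows "0 < octZ n a" "octZ n a < 1 / ln (real n + 1)"
proof -
  have ln_pos: "0 < ln (real n + 1)" using assms(2) by simp
  moreover have less: "ln (real n + 1) < inv_sq_dist_sum n a" by (rule ln_less_inv_sq_dist_sum[OF assms])
  ultimately have "0 < inv_sq_dist_sum n a" by linarith
  with ln_pos less show "0 < octZ n a" "octZ n a < 1 / ln (real n + 1)"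
    by (simp_all add: octZ_eq inverse_eq_divide frac_less2)
qed

subsection \<open>Probability that a vertex chooses a given contact\<close>

lemma pmf_choice_pmf:
  assumes "a \<in> octV n" "1 \<le> n"
  shows "pmf (choice_pmf n a) b =
    (if b \<in> octV n - {a} then octZ n a / (real (octDist n a b))^2 else 0)"
proof -
  define p where "p = (\<lambda>v. if v \<in> octV n - {a} then octZ n a / (real (octDist n a v))^2 else 0)"
  have Z: "0 < octZ n a" using octZ_bounds[OF assms] by simp
  then have nonneg: "\<And>v. 0 \<le> p v" by (simp add: p_def)
  have "(\<integral>\<^sup>+v. ennreal (p v) \<partial>count_space UNIV) = (\<Sum>v\<in>octV n - {a}. ennreal (p v))"
    by (rule nn_integral_count_space') (auto simp: p_def finite_octV)
  also have "\<dots> = ennreal (\<Sum>v\<in>octV n - {a}. p v)" using nonneg by simp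
  also have "(\<Sum>v\<in>octV n - {a}. p v) = octZ n a * inv_sq_dist_sum n a"
    by (simp add: p_def inv_sq_dist_sum_def sum_distrib_left)
  also have "\<dots> = 1" using Z by (simp add: octZ_eq)
  finally have "(\<integral>\<^sup>+v. ennreal (p v) \<partial>count_space UNIV) = 1" by simp
  from pmf_embed_pmf[OF nonneg this] show ?thesis
    by (simp add: choice_pmf_def p_def[symmetric]) (simp add: p_def)
qed

lemma prob_chooses:
  assumes "a \<in> octV n"
  shows "measure_pmf.prob (osw_pmf n) {f. f a = b} = pmf (choice_pmf n a) b"
proof -
  have "measure_pmf.prob (osw_pmf n) {f. f a = b} =
      measure_pmf.prob (map_pmf (\<lambda>f. f a) (osw_pmf n)) {b}"
    by (simp add: vimage_def)
  also have "map_pmf (\<lambda>f. f a) (osw_pmf n) = choice_pmf n a"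
    unfolding osw_pmf_def using assms by (simp add: Pi_pmf_component[OF finite_octV])
  finally show ?thesis by (simp add: measure_pmf_single)
qed

lemma prob_chooses_far_less:
  assumes "a \<in> octV n" "b \<in> octV n" "2 \<le> octDist n a b" "1 \<le> n"
  shows "measure_pmf.prob (osw_pmf n) {f. f a = b} < 1 / (4 * ln (real n + 1))"
proof -
  have "a \<noteq> b" using assms(3) octDist_self by (metis not_numeral_le_zero)
  have "(2::real)^2 \<le> (real (octDist n a b))^2" using assms(3) by (intro power_mono) auto
  then have "octZ n a / (real (octDist n a b))^2 \<le> octZ n a / 4"
    using octZ_bounds(1)[OF assms(1,4)] assms(3) by (intro divide_left_mono) auto
  also have "\<dots> < 1 / (4 * ln (real n + 1))"
    using octZ_bounds(2)[OF assms(1,4)] by simp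
  finally show ?thesis
    using assms \<open>a \<noteq> b\<close> by (simp add: prob_chooses pmf_choice_pmf)
qed

subsection \<open>At most 18 candidate pairs\<close>

definition is_step :: "vtx \<Rightarrow> bool" where
  "is_step d \<longleftrightarrow> \<bar>fst d\<bar> \<le> 1 \<and> \<bar>fst (snd d)\<bar> \<le> 1 \<and> \<bar>snd (snd d)\<bar> \<le> 1"

lemma octAdj_iff: "octAdj n v w \<longleftrightarrow> v \<in> octV n \<and> w \<in> octV n \<and> v \<noteq> w \<and> is_step (w - v)"
  by (auto simp: octAdj_def is_step_def abs_minus_commute)

text \<open>For \<open>\<bar>e\<bar> \<le> 1\<close>, \<open>\<bar>t + e\<bar> - \<bar>t\<bar>\<close> depends only on \<open>sgn t\<close> and \<open>e\<close>.\<close>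

definition coord_change :: "int \<Rightarrow> int \<Rightarrow> int" where
  "coord_change s e = (if s = 0 then \<bar>e\<bar> else s * e)"

lemma abs_add_step: "\<bar>e\<bar> \<le> 1 \<Longrightarrow> \<bar>t + e\<bar> = \<bar>t\<bar> + coord_change (sgn t) e" for t e :: int
  by (auto simp: coord_change_def sgn_if)

definition sgn_vtx :: "vtx \<Rightarrow> vtx" where
  "sgn_vtx v = (sgn (fst v), sgn (fst (snd v)), sgn (snd (snd v)))"

definition norm1_change :: "vtx \<Rightarrow> vtx \<Rightarrow> int" where
  "norm1_change s d = coord_change (fst s) (fst d) + coord_change (fst (snd s)) (fst (snd d))
     + coord_change (snd (snd s)) (snd (snd d))"

definition unit_cube :: "vtx list" where
  "unit_cube = [(x, y, z). x \<leftarrow> [-1, 0, 1], y \<leftarrow> [-1, 0, 1], z \<leftarrow> [-1, 0, 1]]"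

definition surface_steps :: "vtx \<Rightarrow> vtx list" where
  "surface_steps s = [d \<leftarrow> unit_cube. d \<noteq> 0 \<and> norm1_change s d = 0]"

definition far_step_pairs :: "vtx \<Rightarrow> (vtx \<times> vtx) list" where
  "far_step_pairs s = [(d, e) \<leftarrow> List.product (surface_steps s) (surface_steps s). \<not> is_step (d - e)]"

lemma length_far_step_pairs:
  "s \<in> {-1, 0, 1} \<times> {-1, 0, 1} \<times> {-1, 0, 1} \<Longrightarrow> length (far_step_pairs s) \<le> 18"
  by (elim SigmaE insertE emptyE; hypsubst; code_simp)

lemma set_unit_cube: "set unit_cube = {-1, 0, 1} \<times> {-1, 0, 1} \<times> {-1, 0, 1}"
  by (auto simp: unit_cube_def)

lemma in_unit_cube:
  assumes "is_step d"
  shows "d \<in> set unit_cube"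
proof -
  have unit: "t \<in> {-1, 0, 1}" if "\<bar>t\<bar> \<le> 1" for t :: int using that by auto
  show ?thesis
    using assms unit unfolding is_step_def set_unit_cube mem_Times_iff by blast
qed

lemma in_surface_steps:
  assumes "octAdj n u a"
  shows "a - u \<in> set (surface_steps (sgn_vtx u))"
proof -
  have step: "is_step (a - u)" and "a \<noteq> u" "a \<in> octV n" "u \<in> octV n"
    using assms by (auto simp: octAdj_iff)
  obtain x y z where u: "u = (x, y, z)" by (cases u)
  obtain p q r where d: "a - u = (p, q, r)" by (cases "a - u")
  have a: "a = (x + p, y + q, z + r)" using d by (auto simp: u prod_eq_iff)
  have "norm1_change (sgn_vtx u) (a - u) = 0"
    using \<open>a \<in> octV n\<close> \<open>u \<in> octV n\<close> step
      abs_add_step[of p x] abs_add_step[of q y] abs_add_step[of r z]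
    by (simp add: norm1_change_def sgn_vtx_def octV_def is_step_def d u a)
  moreover have "a - u \<noteq> 0" using \<open>a \<noteq> u\<close> by simp
  ultimately show ?thesis using in_unit_cube[OF step] by (simp add: surface_steps_def)
qed

definition far_neighbour_pairs :: "nat \<Rightarrow> vtx \<Rightarrow> (vtx \<times> vtx) set" where
  "far_neighbour_pairs n u = {(a, b). octAdj n u a \<and> octAdj n b u \<and> 2 \<le> octDist n a b}"

lemma far_neighbour_pairs_subset:
  "far_neighbour_pairs n u \<subseteq> (\<lambda>(d, e). (u + d, u + e)) ` set (far_step_pairs (sgn_vtx u))"
proof safe
  fix a b assume "(a, b) \<in> far_neighbour_pairs n u"
  then have adj: "octAdj n u a" "octAdj n u b" and far: "2 \<le> octDist n a b"
    by (auto simp: far_neighbour_pairs_def octAdj_def)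
  have "\<not> octAdj n a b" using far octDist_le_1_if_octAdj by fastforce
  moreover have "a \<noteq> b" using far octDist_self by (metis not_numeral_le_zero)
  ultimately have "\<not> is_step ((a - u) - (b - u))"
    using adj by (auto simp: octAdj_iff is_step_def abs_minus_commute)
  then have "(a - u, b - u) \<in> set (far_step_pairs (sgn_vtx u))"
    using in_surface_steps[OF adj(1)] in_surface_steps[OF adj(2)] by (simp add: far_step_pairs_def)
  then show "(a, b) \<in> (\<lambda>(d, e). (u + d, u + e)) ` set (far_step_pairs (sgn_vtx u))"
    by (force intro: image_eqI[where x = "(a - u, b - u)"])
qed

lemma finite_far_neighbour_pairs: "finite (far_neighbour_pairs n u)"
  using far_neighbour_pairs_subset by (rule finite_subset) simp

lemma card_far_neighbour_pairs_le: "card (far_neighbour_pairs n u) \<le> 18"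
proof -
  let ?I = "(\<lambda>(d, e). (u + d, u + e)) ` set (far_step_pairs (sgn_vtx u))"
  have "card (far_neighbour_pairs n u) \<le> card ?I"
    using far_neighbour_pairs_subset by (rule card_mono[rotated]) simp
  also have "\<dots> \<le> length (far_step_pairs (sgn_vtx u))"
    using card_image_le card_length order_trans by blast
  also have "\<dots> \<le> 18"
    by (rule length_far_step_pairs) (auto simp: sgn_vtx_def sgn_if)
  finally show ?thesis .
qed

lemma prob_E2_le_sum:
  "measure_pmf.prob (osw_pmf n) (E2 n u)
     \<le> (\<Sum>(a, b)\<in>far_neighbour_pairs n u. measure_pmf.prob (osw_pmf n) {f. f a = b})"
proof -
  let ?P = "far_neighbour_pairs n u"
  have "E2 n u \<subseteq> (\<Union>(a, b)\<in>?P. {f. f a = b})"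
    unfolding E2_def far_neighbour_pairs_def type_s_def type_w_def by force
  then have "measure_pmf.prob (osw_pmf n) (E2 n u)
      \<le> measure_pmf.prob (osw_pmf n) (\<Union>(a, b)\<in>?P. {f. f a = b})"
    by (intro measure_pmf.finite_measure_mono) simp_all
  also have "\<dots> \<le> (\<Sum>(a, b)\<in>?P. measure_pmf.prob (osw_pmf n) {f. f a = b})"
    using measure_pmf.finite_measure_subadditive_finite[OF finite_far_neighbour_pairs,
        where A = "\<lambda>(a, b). {f. f a = b}"]
    by (simp add: prod.case_distrib)
  finally show ?thesis .
qed

theorem lemma6:
  fixes n :: nat and u :: vtx
  assumes "n \<ge> 1" and "u \<in> octV n"
  shows "measure_pmf.prob (osw_pmf n) (E2 n u) < 9 / (2 * ln (real n + 1))"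
proof -
  let ?P = "far_neighbour_pairs n u"
  let ?prob = "measure_pmf.prob (osw_pmf n)"
  have "?prob (E2 n u) \<le> (\<Sum>(a, b)\<in>?P. ?prob {f. f a = b})"
    by (rule prob_E2_le_sum)
  also have "\<dots> < 9 / (2 * ln (real n + 1))"
  proof (cases "?P = {}")
    case True
    then show ?thesis using assms(1) by simp
  next
    case False
    have "?prob {f. f a = b} < 1 / (4 * ln (real n + 1))" if "(a, b) \<in> ?P" for a b
      using that assms(1) prob_chooses_far_less by (auto simp: far_neighbour_pairs_def octAdj_def)
    then have "(\<Sum>(a, b)\<in>?P. ?prob {f. f a = b}) < (\<Sum>(a, b)\<in>?P. 1 / (4 * ln (real n + 1)))"
      using finite_far_neighbour_pairs False by (intro sum_strict_mono) auto
    also have "\<dots> = card ?P / (4 * ln (real n + 1))" by simp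
    also have "\<dots> \<le> 18 / (4 * ln (real n + 1))"
      using card_far_neighbour_pairs_le assms(1) by (intro divide_right_mono) auto
    finally show ?thesis by simp
  qed
  finally show ?thesis .
qed

end
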